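(* Let $s_1\ge1$ and $s_2\ge0$ be integers, let $f_{s_1,s_2}(N)=\binom{s_2}{N}\sum_i\binom{s_1}{i}\binom{s_1}{N-i}\binom{N}{i}$ for integers $N$, and let $g(s_1,s_2)$ be the integer at which $f_{s_1,s_2}$ attains its maximum (so that $f_{s_1,s_2}$ is non-decreasing for $N\le g(s_1,s_2)$ and non-increasing for $N\ge g(s_1,s_2)$). (a) If $s_2\le\frac12\left(\sqrt{8s_1+9}-1\right)$, then $g(s_1,s_2)=s_2$. (b) For all $s_1,s_2$, $g(s_1,s_2)\le 2s_1$. Moreover, for each integer $d$ with $0\le d\le 4$, $$g(s_1,s_2)\ge 2s_1-d\iff s_2\ge \frac{2}{d+1}(s_1^2+s_1)-\frac{d+2}{2}.$$
   Context: Binomial coefficients $\binom{a}{b}$ are $0$ when $b<0$ or $b>a$. The function $f_{s_1,s_2}$ is unimodal in $N$, so $g(s_1,s_2)$ exists; if the maximum is attained at two consecutive integers, either may be taken as $g(s_1,s_2)$. *)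

theory Defs
  imports Complex_Main
begin

text \<open>f_{s1,s2}(N) for integer N; binomials vanish outside range, so N < 0 gives 0,
  and for N >= 0 only summands 0 <= i <= N can be nonzero.\<close>
definition fss :: "nat \<Rightarrow> nat \<Rightarrow> int \<Rightarrow> nat" where
  "fss s1 s2 N = (if N < 0 then 0 else
     (s2 choose nat N) * (\<Sum>i\<le>nat N. (s1 choose i) * (s1 choose (nat N - i)) * (nat N choose i)))"

definition gss :: "nat \<Rightarrow> nat \<Rightarrow> int" where
  "gss s1 s2 = (GREATEST N. \<forall>M. fss s1 s2 M \<le> fss s1 s2 N)"

end

theory Submission
  imports Defs
begin

(* Write f(N) = (s2 choose N) * A(N), where A(N) is the inner sum (triple_sum below).
   Expanding (N choose i) by Vandermonde gives
   A(N) = sum_m (s1 choose m)^2 * ((2 s1 - 2 m) choose (N - 2 m)), and from this expansion one gets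
   the growth estimate 2 (2 s1 + 1 - N) A(N - 1) <= (N + 1) A(N).  As
   f(N) / f(N - 1) = (s2 + 1 - N) / N * A(N) / A(N - 1), the estimate makes f increase whenever
   N (N + 1) <= 2 (s2 + 1 - N) (2 s1 + 1 - N); this covers every N <= s2 in (a), and every
   N < 2 s1 - d under the condition of (b).
   The step at N = 2 s1 - d is decided exactly: A(2 s1 - d) * (2 s1)_d * d! is (2 s1 choose s1)
   times an explicit polynomial top_poly d s1, and for d <= 4 the ratio
   2 top_poly (d + 1) s1 / top_poly d s1 lies so close to (2 s1 - d)^2 + d that, the condition of (b) being a statement about integers, the sign of
   f(N) - f(N - 1) is exactly that condition.  Above 2 s1 - d the same criterion for smaller d
   shows that f decreases. *)

section \<open>The inner sum\<close>

definition triple_sum :: "nat \<Rightarrow> nat \<Rightarrow> nat" where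
  "triple_sum s K = (\<Sum>i\<le>K. (s choose i) * (s choose (K - i)) * (K choose i))"

text \<open>\<open>offset_choose s m K\<close> is \<open>(2s - 2m) choose (K - 2m)\<close>, made zero for \<open>K < 2m\<close>
  instead of relying on truncated subtraction.\<close>
definition offset_choose :: "nat \<Rightarrow> nat \<Rightarrow> nat \<Rightarrow> nat" where
  "offset_choose s m K = (if 2*m \<le> K then (2*s - 2*m) choose (K - 2*m) else 0)"

lemma choose_eq_sum_choose_mult_choose:
  assumes "i \<le> K"
  shows "K choose i = (\<Sum>m\<le>K. (i choose m) * ((K - i) choose m))"
proof -
  have "K choose i = K choose (K - i)" using assms binomial_symmetric by blast
  also have "\<dots> = (\<Sum>m\<le>K-i. (i choose m) * ((K-i) choose (K - i - m)))"
    using vandermonde[of i "K-i" "K-i"] assms by simp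
  also have "\<dots> = (\<Sum>m\<le>K-i. (i choose m) * ((K-i) choose m))"
    by (intro sum.cong refl) (metis atMost_iff binomial_symmetric)
  also have "\<dots> = (\<Sum>m\<le>K. (i choose m) * ((K-i) choose m))"
    by (rule sum.mono_neutral_left) auto
  finally show ?thesis .
qed

lemma choose_mult_choose_if:
  "(s choose i) * (i choose m) = (if m \<le> i then (s choose m) * ((s - m) choose (i - m)) else 0)"
proof (cases "m \<le> i \<and> i \<le> s")
  case True
  then show ?thesis using choose_mult by simp
next
  case False
  then show ?thesis by (cases "m \<le> s") (auto simp: binomial_eq_0)
qed

lemma sum_choose_mult_choose_offset:
  assumes "2*m \<le> K"
  shows "(\<Sum>i\<le>K. if m \<le> i \<and> m \<le> K - i then (n choose (i - m)) * (n choose (K - i - m)) else 0)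
     = (n + n) choose (K - 2*m)"
proof -
  have "(\<Sum>i\<le>K. if m \<le> i \<and> m \<le> K - i then (n choose (i - m)) * (n choose (K - i - m)) else 0)
      = (\<Sum>i\<in>(\<lambda>l. l + m) ` {..K-2*m}. (n choose (i - m)) * (n choose (K - i - m)))"
  proof (rule sum.mono_neutral_cong_right)
    show "\<forall>i\<in>{..K} - (\<lambda>l. l + m) ` {..K-2*m}.
        (if m \<le> i \<and> m \<le> K - i then (n choose (i - m)) * (n choose (K - i - m)) else 0) = 0"
    proof
      fix i assume i: "i \<in> {..K} - (\<lambda>l. l + m) ` {..K-2*m}"
      have "\<not> (m \<le> i \<and> m \<le> K - i)"
      proof
        assume "m \<le> i \<and> m \<le> K - i"
        then have "i - m \<le> K - 2*m" "i = (i - m) + m" using i by auto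
        then show False using i by blast
      qed
      then show "(if m \<le> i \<and> m \<le> K - i then (n choose (i - m)) * (n choose (K - i - m)) else 0) = 0"
        by (simp only: if_False)
    qed
  qed (use assms in auto)
  also have "\<dots> = (\<Sum>l\<le>K-2*m. (n choose l) * (n choose (K - 2*m - l)))"
    by (subst sum.reindex) (auto simp: inj_on_def algebra_simps intro!: sum.cong arg_cong[where f="\<lambda>x. n choose x"])
  also have "\<dots> = (n + n) choose (K - 2*m)" by (rule vandermonde)
  finally show ?thesis .
qed

lemma triple_sum_eq_sum_offset_choose:
  "triple_sum s K = (\<Sum>m\<le>s. (s choose m)^2 * offset_choose s m K)"
proof -
  let ?c = "\<lambda>i m. if m \<le> i \<and> m \<le> K - i then ((s-m) choose (i - m)) * ((s-m) choose (K - i - m)) else 0"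
  have "triple_sum s K = (\<Sum>i\<le>K. \<Sum>m\<le>K. (s choose i) * (i choose m) * ((s choose (K - i)) * ((K - i) choose m)))"
    unfolding triple_sum_def
    by (rule sum.cong) (auto simp: choose_eq_sum_choose_mult_choose sum_distrib_left mult_ac)
  also have "\<dots> = (\<Sum>i\<le>K. \<Sum>m\<le>K. (s choose m)^2 * ?c i m)"
    by (intro sum.cong refl) (simp add: choose_mult_choose_if power2_eq_square)
  also have "\<dots> = (\<Sum>m\<le>K. (s choose m)^2 * (\<Sum>i\<le>K. ?c i m))"
    by (subst sum.swap) (simp add: sum_distrib_left)
  also have "\<dots> = (\<Sum>m\<le>K. (s choose m)^2 * offset_choose s m K)"
  proof (intro sum.cong refl)
    fix m
    have "(\<Sum>i\<le>K. ?c i m) = offset_choose s m K"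
    proof (cases "2*m \<le> K")
      case True
      have "s - m + (s - m) = 2*s - 2*m" by simp
      then show ?thesis
        using sum_choose_mult_choose_offset[OF True, of "s - m"] True by (simp add: offset_choose_def)
    next
      case False
      then show ?thesis by (auto simp: offset_choose_def intro!: sum.neutral)
    qed
    then show "(s choose m)^2 * (\<Sum>i\<le>K. ?c i m) = (s choose m)^2 * offset_choose s m K" by simp
  qed
  also have "\<dots> = (\<Sum>m\<le>s. (s choose m)^2 * offset_choose s m K)"
    by (rule sum.mono_neutral_cong) (auto simp: offset_choose_def)
  finally show ?thesis .
qed

section \<open>A growth estimate for the inner sum\<close>

lemma Suc_times_binomial_eq_diff_times_binomial:
  "Suc k * (n choose Suc k) = (n - k) * (n choose k)"
  using binomial_absorption[of k n] binomial_absorb_comp[of n k] by simp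

lemma offset_choose_step:
  assumes "K \<ge> 1" "m \<le> s"
  shows "int K * offset_choose s m K
    = (2*int s + 1 - int K) * offset_choose s m (K-1) + 2 * int m * offset_choose s m K"
proof (cases "2*m < K")
  case True
  define n where "n = 2*s - 2*m"
  define j where "j = K - 2*m - 1"
  have K: "K - 2*m = Suc j" "K - 1 - 2*m = j" using True by (auto simp: j_def)
  have t1: "offset_choose s m K = n choose Suc j"
    using True K by (simp add: offset_choose_def n_def)
  have t2: "offset_choose s m (K-1) = n choose j"
  proof -
    have "2*m \<le> K - 1" using True by simp
    then show ?thesis using K unfolding offset_choose_def n_def by (simp only: if_True)
  qed
  show ?thesis
  proof (cases "j \<le> n")
    case True
    have nj: "int (n - j) = 2*int s + 1 - int K" and KK: "int K = int (Suc j) + 2 * int m"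
      using True \<open>2*m < K\<close> assms(2) unfolding n_def j_def by auto
    have "int (Suc j) * int (n choose Suc j) = int (n - j) * int (n choose j)"
      using Suc_times_binomial_eq_diff_times_binomial by (simp only: of_nat_mult[symmetric])
    then show ?thesis unfolding KK t1 t2 nj by (simp add: distrib_right)
  next
    case False
    then show ?thesis using t1 t2 by (simp add: binomial_eq_0)
  qed
next
  case False
  then show ?thesis using assms(1)
    by (cases "2*m = K") (auto simp: offset_choose_def)
qed

lemma offset_choose_shift:
  assumes "m \<le> s"
  shows "(s choose m)^2 * ((int K - 2*int m) * (int K - 2*int m - 1)) * offset_choose s m K
    = 2 * int (m+1) * (s choose (m+1)) * (s choose m) * (2*int s - 2*int m - 1) * offset_choose s (m+1) K"
proof (cases "2*m + 2 \<le> K")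
  case True
  define n where "n = 2*s - 2*m"
  define i where "i = K - 2*m - 2"
  have t1: "offset_choose s m K = n choose Suc (Suc i)" using True unfolding offset_choose_def n_def i_def
    by (simp add: Suc_diff_Suc numeral_2_eq_2)
  have t2: "offset_choose s (m+1) K = (n - 2) choose i" using True unfolding offset_choose_def n_def i_def
    by (simp add: algebra_simps)
  have factors: "(int K - 2*int m) * (int K - 2*int m - 1) = int (Suc (Suc i)) * int (Suc i)"
    using True unfolding i_def by auto
  have "Suc (Suc i) * Suc i * (n choose Suc (Suc i)) = n * (n-1) * ((n-2) choose i)"
    using binomial_absorption[of "Suc i" n] binomial_absorption[of i "n-1"]
    by (metis diff_diff_left mult.assoc mult.left_commute one_add_one)
  then have absorb: "int (Suc (Suc i)) * int (Suc i) * int (n choose Suc (Suc i))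
      = int n * int (n-1) * int ((n-2) choose i)"
    by (metis of_nat_mult)
  show ?thesis
  proof (cases "m = s")
    case True
    then show ?thesis using t1 by (simp add: n_def)
  next
    case False
    then have nn: "int n = 2 * int (s - m)" "int (n - 1) = 2*int s - 2*int m - 1"
      using assms unfolding n_def by auto
    have absorb_m: "int (s - m) * (s choose m) = int (Suc m) * (s choose Suc m)"
      using Suc_times_binomial_eq_diff_times_binomial[of m s] by (metis of_nat_mult)
    have "(s choose m)^2 * ((int K - 2*int m) * (int K - 2*int m - 1)) * offset_choose s m K
        = (s choose m) * ((s choose m) * int n) * int (n-1) * ((n-2) choose i)"
      unfolding factors t1 power2_eq_square using absorb by (simp add: mult_ac)
    also have "(s choose m) * int n = 2 * int (Suc m) * (s choose Suc m)"
      unfolding nn using absorb_m by (simp add: mult_ac)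
    finally show ?thesis unfolding t2 nn by (simp add: algebra_simps)
  qed
next
  case False
  then have "offset_choose s (m+1) K = 0" unfolding offset_choose_def by simp
  moreover have "((int K - 2*int m) * (int K - 2*int m - 1)) * offset_choose s m K = 0"
  proof (cases "2*m \<le> K")
    case True
    with False have "int K - 2*int m = 0 \<or> int K - 2*int m - 1 = 0" by auto
    then show ?thesis by auto
  qed (simp add: offset_choose_def)
  ultimately show ?thesis by (simp add: mult.assoc)
qed

lemma triple_sum_int:
  "int (triple_sum s K) = (\<Sum>m\<le>s. (s choose m)^2 * int (offset_choose s m K))"
  unfolding triple_sum_eq_sum_offset_choose by simp

lemma triple_sum_recurrence:
  assumes "K \<ge> 1"
  shows "int K * triple_sum s K
    = (2*int s + 1 - int K) * triple_sum s (K-1)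
      + 2 * (\<Sum>m\<le>s. int m * (s choose m)^2 * offset_choose s m K)"
proof -
  have "int K * triple_sum s K = (\<Sum>m\<le>s. (s choose m)^2 * (int K * offset_choose s m K))"
    unfolding triple_sum_int sum_distrib_left by (simp add: mult_ac)
  also have "\<dots> = (\<Sum>m\<le>s. (s choose m)^2 *
      ((2*int s + 1 - int K) * offset_choose s m (K-1) + 2 * int m * offset_choose s m K))"
    by (rule sum.cong) (simp_all add: offset_choose_step[OF assms])
  also have "\<dots> = (2*int s + 1 - int K) * triple_sum s (K-1)
      + 2 * (\<Sum>m\<le>s. int m * (s choose m)^2 * offset_choose s m K)"
    unfolding triple_sum_int sum_distrib_left sum.distrib[symmetric]
    by (rule sum.cong) (simp_all add: algebra_simps)
  finally show ?thesis .
qed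

lemma sum_offset_choose_quadratic_weight:
  "(\<Sum>m\<le>s. (s choose m)^2 * ((int K - 2*int m) * (int K - 2*int m - 1)) * offset_choose s m K)
   = (\<Sum>m\<le>s. 2 * int m * (s choose m) * (s choose (m - 1)) * (2*int s - 2*int m + 1) * offset_choose s m K)"
  (is "_ = (\<Sum>m\<le>s. ?r m)")
proof -
  have "(\<Sum>m\<le>s. (s choose m)^2 * ((int K - 2*int m) * (int K - 2*int m - 1)) * offset_choose s m K)
     = (\<Sum>m\<le>s. ?r (Suc m))"
  proof (rule sum.cong[OF refl])
    fix m assume "m \<in> {..s}"
    then show "(s choose m)^2 * ((int K - 2*int m) * (int K - 2*int m - 1)) * offset_choose s m K = ?r (Suc m)"
      by (subst offset_choose_shift) (simp_all add: algebra_simps)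
  qed
  also have "\<dots> = (\<Sum>m\<le>Suc s. ?r m)"
    by (subst sum.atMost_Suc_shift) simp
  also have "\<dots> = (\<Sum>m\<le>s. ?r m)"
    by simp
  finally show ?thesis .
qed

lemma choose_pred_mult_le:
  assumes "1 \<le> m" "m \<le> s"
  shows "(2*int s - 2*int m + 1) * (s choose (m - 1)) \<le> (2 * int m + 1) * (s choose m)"
proof -
  obtain k where m: "m = Suc k" using assms(1) by (cases m) auto
  have "int m * (s choose m) = int (s - k) * (s choose (m - 1))"
    using Suc_times_binomial_eq_diff_times_binomial[of k s] unfolding m by (metis diff_Suc_1 of_nat_mult)
  also have "int (s - k) = int s - int m + 1"
    using assms(2) m by simp
  finally have absorb: "int m * (s choose m) = (int s - int m + 1) * (s choose (m - 1))" .
  have "int m * ((2 * int m + 1) * (s choose m)) = (2 * int m + 1) * (int s - int m + 1) * (s choose (m - 1))"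
    unfolding mult.left_commute[of "int m"] absorb by (simp add: mult.assoc)
  then have "int m * ((2*int s - 2*int m + 1) * (s choose (m - 1)))
      = int m * ((2 * int m + 1) * (s choose m)) - (int s + 1) * (s choose (m - 1))"
    by (simp add: algebra_simps)
  also have "\<dots> \<le> int m * ((2 * int m + 1) * (s choose m))"
    by simp
  finally show ?thesis using assms(1) by (simp add: mult_le_cancel_left)
qed

lemma triple_sum_growth:
  assumes "K \<ge> 1"
  shows "2 * (2*int s + 1 - int K) * triple_sum s (K-1) \<le> (int K + 1) * triple_sum s K"
proof -
  txt \<open>Split \<open>K (K - 1) = (K - 2m) (K - 2m - 1) + (4 m K - 4 m\<^sup>2 - 2 m)\<close> inside the expansion of the
    inner sum; after the index shift the first part is bounded termwise by \<open>choose_pred_mult_le\<close>,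
    leaving \<open>4 K\<close> times the moment sum of \<open>triple_sum_recurrence\<close>.\<close>
  let ?t = "\<lambda>m. (s choose m)^2 * int (offset_choose s m K)"
  have "int K * (int K - 1) * triple_sum s K =
     (\<Sum>m\<le>s. (s choose m)^2 * ((int K - 2*int m) * (int K - 2*int m - 1)) * offset_choose s m K)
     + (\<Sum>m\<le>s. ?t m * (4*int m * int K - 4 * int m^2 - 2*int m))"
    unfolding triple_sum_int sum_distrib_left sum.distrib[symmetric]
    by (rule sum.cong) (simp_all add: algebra_simps power2_eq_square)
  also have "\<dots> \<le> (\<Sum>m\<le>s. ?t m * (4 * int m^2 + 2 * int m))
     + (\<Sum>m\<le>s. ?t m * (4*int m * int K - 4 * int m^2 - 2*int m))"
  proof -
    have "2 * int m * (s choose m) * (s choose (m - 1)) * (2*int s - 2*int m + 1) * offset_choose s m K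
        \<le> ?t m * (4 * int m^2 + 2 * int m)" if "m \<le> s" for m
    proof (cases "m = 0")
      case False
      have "(2 * int m * (s choose m) * offset_choose s m K) * ((2*int s - 2*int m + 1) * (s choose (m - 1)))
          \<le> (2 * int m * (s choose m) * offset_choose s m K) * ((2 * int m + 1) * (s choose m))"
        using choose_pred_mult_le[of m s] False that by (intro mult_left_mono) auto
      then show ?thesis by (simp add: algebra_simps power2_eq_square)
    qed simp
    then show ?thesis
      unfolding sum_offset_choose_quadratic_weight by (intro add_right_mono sum_mono) simp
  qed
  also have "\<dots> = 4 * int K * (\<Sum>m\<le>s. int m * (s choose m)^2 * offset_choose s m K)"
    unfolding sum_distrib_left sum.distrib[symmetric]
    by (rule sum.cong) (simp_all add: algebra_simps power2_eq_square)
  finally have "int K * ((int K - 1) * triple_sum s K)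
      \<le> int K * (4 * (\<Sum>m\<le>s. int m * (s choose m)^2 * offset_choose s m K))"
    by (simp add: algebra_simps)
  then have "(int K - 1) * triple_sum s K \<le> 4 * (\<Sum>m\<le>s. int m * (s choose m)^2 * offset_choose s m K)"
    using assms by (simp add: mult_le_cancel_left)
  moreover have "2 * (2*int s + 1 - int K) * triple_sum s (K-1)
      = 2 * (int K * triple_sum s K) - 4 * (\<Sum>m\<le>s. int m * (s choose m)^2 * offset_choose s m K)"
    using triple_sum_recurrence[OF assms, of s] by (simp add: algebra_simps)
  ultimately show ?thesis by (simp add: algebra_simps)
qed

section \<open>The inner sum near its top degree\<close>

lemma triple_sum_top:
  assumes "d \<le> s"
  shows "triple_sum s (2*s - d) = (\<Sum>p\<le>d. (s choose p) * (s choose (d-p)) * ((2*s-d) choose (s-p)))"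
proof -
  let ?K = "2*s - d"
  let ?g = "\<lambda>i. (s choose i) * (s choose (?K - i)) * (?K choose i)"
  have "triple_sum s ?K = (\<Sum>i\<in>(\<lambda>p. s - p) ` {..d}. ?g i)"
    unfolding triple_sum_def
  proof (rule sum.mono_neutral_right)
    show "\<forall>i\<in>{..?K} - (\<lambda>p. s - p) ` {..d}. ?g i = 0"
    proof
      fix i assume i: "i \<in> {..?K} - (\<lambda>p. s - p) ` {..d}"
      have "i > s \<or> ?K - i > s"
      proof (rule ccontr)
        assume "\<not> (i > s \<or> ?K - i > s)"
        then have "i = s - (s - i)" "s - i \<le> d" by auto
        then show False using i by blast
      qed
      then show "?g i = 0" by auto
    qed
  qed (use assms in auto)
  also have "\<dots> = (\<Sum>p\<le>d. ?g (s - p))"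
    by (subst sum.reindex) (use assms in \<open>auto simp: inj_on_def\<close>)
  also have "\<dots> = (\<Sum>p\<le>d. (s choose p) * (s choose (d-p)) * ((2*s-d) choose (s-p)))"
  proof (rule sum.cong[OF refl])
    fix p assume "p \<in> {..d}"
    then have p: "p \<le> d" by simp
    have "s choose (s - p) = s choose p"
      using p assms binomial_symmetric[of p s] by simp
    moreover have "s choose (?K - (s - p)) = s choose (d - p)"
    proof -
      have "?K - (s - p) = s - (d - p)" using p assms by auto
      then show ?thesis using binomial_symmetric[of "d - p" s] assms by simp
    qed
    ultimately show "?g (s - p) = (s choose p) * (s choose (d-p)) * ((2*s-d) choose (s-p))"
      by simp
  qed
  finally show ?thesis .
qed

lemma fact_div_fact_eq_prod:
  assumes "p \<le> n"
  shows "fact n / fact (n - p) = (\<Prod>i<p. real n - real i)"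
  using assms
proof (induction p)
  case (Suc p)
  have "fact (n - p) = (real (n - p) * fact (n - Suc p) :: real)"
    using Suc.prems by (metis Suc_diff_Suc Suc_le_lessD fact_Suc of_nat_Suc)
  then have "fact n / fact (n - Suc p) = fact n / fact (n - p) * real (n - p)"
    using Suc.prems by simp
  then show ?case
    using Suc by (simp add: of_nat_diff)
qed simp

definition top_poly :: "nat \<Rightarrow> real \<Rightarrow> real" where
  "top_poly d s = (\<Sum>p\<le>d. real (d choose p) * (\<Prod>i<p. s - real i)^2 * (\<Prod>i<d-p. s - real i)^2)"

lemma top_poly_nonneg: "top_poly d s \<ge> 0"
  unfolding top_poly_def by (intro sum_nonneg mult_nonneg_nonneg) auto

lemma top_summand_fact_form:
  assumes "p \<le> d" "d \<le> s"
  shows "real ((s choose p) * (s choose (d-p)) * ((2*s-d) choose (s-p))) * (fact (2*s) / fact (2*s-d)) * fact d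
     = real ((2*s) choose s) * real (d choose p) * (fact s / fact (s-p))^2 * (fact s / fact (s-(d-p)))^2"
proof -
  have e: "2*s - d - (s - p) = s - (d - p)" using assms by auto
  have "real ((2*s-d) choose (s-p)) = fact (2*s-d) / (fact (s-p) * fact (s - (d-p)))"
    using binomial_fact[of "s-p" "2*s-d", where 'a=real] assms unfolding e by simp
  moreover have "real ((2*s) choose s) = fact (2*s) / (fact s * fact s)"
    using binomial_fact[of s "2*s"] by simp
  ultimately show ?thesis
    using assms by (simp add: binomial_fact field_simps power2_eq_square)
qed

lemma triple_sum_top_closed_form:
  assumes "d \<le> s"
  shows "triple_sum s (2*s - d) * (\<Prod>i<d. 2 * real s - real i) * fact d
     = real ((2*s) choose s) * top_poly d (real s)"
proof -
  have "triple_sum s (2*s - d) * (\<Prod>i<d. 2 * real s - real i) * fact d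
     = (\<Sum>p\<le>d. real ((s choose p) * (s choose (d-p)) * ((2*s-d) choose (s-p))) * (fact (2*s) / fact (2*s-d)) * fact d)"
    using fact_div_fact_eq_prod[of d "2*s"] assms
    unfolding triple_sum_top[OF assms] of_nat_sum sum_distrib_right by simp
  also have "\<dots> = (\<Sum>p\<le>d. real ((2*s) choose s) * real (d choose p) * (fact s / fact (s-p))^2 * (fact s / fact (s-(d-p)))^2)"
    by (rule sum.cong[OF refl], rule top_summand_fact_form) (use assms in auto)
  also have "\<dots> = real ((2*s) choose s) * top_poly d (real s)"
    unfolding top_poly_def sum_distrib_left
  proof (rule sum.cong[OF refl])
    fix p assume "p \<in> {..d}"
    then have "p \<le> s" "d - p \<le> s" using assms by auto
    then show "real ((2*s) choose s) * real (d choose p) * (fact s / fact (s-p))^2 * (fact s / fact (s-(d-p)))^2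
      = real ((2*s) choose s) * (real (d choose p) * (\<Prod>i<p. real s - real i)^2 * (\<Prod>i<d-p. real s - real i)^2)"
      by (simp add: fact_div_fact_eq_prod)
  qed
  finally show ?thesis .
qed

lemma top_step_nonneg_iff:
  fixes x :: real
  assumes "d + 1 \<le> s"
  shows "0 \<le> x * triple_sum s (2*s-d) - real (2*s-d) * triple_sum s (2*s-d-1)
     \<longleftrightarrow> top_poly (d+1) (real s) \<le> real (d+1) * x * top_poly d (real s)"
proof -
  define c where "c = real ((2*s) choose s)"
  define \<alpha> where "\<alpha> = (\<Prod>i<d. 2 * real s - real i)"
  have "\<alpha> > 0" unfolding \<alpha>_def using assms by (intro prod_pos) auto
  define P where "P = \<alpha> * fact (d+1)"
  have "P > 0" unfolding P_def using \<open>\<alpha> > 0\<close> by simp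
  have "c > 0" unfolding c_def by simp
  have closed_d: "triple_sum s (2*s - d) * \<alpha> * fact d = c * top_poly d (real s)"
    using triple_sum_top_closed_form[of d s] assms unfolding c_def \<alpha>_def by simp
  have closed_Suc_d: "triple_sum s (2*s - d - 1) * (\<alpha> * (2 * real s - real d)) * fact (d+1) = c * top_poly (d+1) (real s)"
    using triple_sum_top_closed_form[of "d+1" s] assms unfolding c_def \<alpha>_def by (simp add: diff_diff_add)
  have "0 \<le> x * triple_sum s (2*s-d) - real (2*s-d) * triple_sum s (2*s-d-1)
      \<longleftrightarrow> 0 \<le> (x * triple_sum s (2*s-d) - real (2*s-d) * triple_sum s (2*s-d-1)) * P"
    using \<open>P > 0\<close> by (simp add: zero_le_mult_iff)
  also have "(x * triple_sum s (2*s-d) - real (2*s-d) * triple_sum s (2*s-d-1)) * P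
      = real (d+1) * x * (triple_sum s (2*s - d) * \<alpha> * fact d)
        - triple_sum s (2*s - d - 1) * (\<alpha> * (2 * real s - real d)) * fact (d+1)"
    using assms unfolding P_def by (simp add: algebra_simps of_nat_diff)
  also have "\<dots> = c * (real (d+1) * x * top_poly d (real s) - top_poly (d+1) (real s))"
    unfolding closed_d closed_Suc_d by (simp add: algebra_simps)
  also have "0 \<le> \<dots> \<longleftrightarrow> top_poly (d+1) (real s) \<le> real (d+1) * x * top_poly d (real s)"
    using \<open>c > 0\<close> by (simp add: zero_le_mult_iff)
  finally show ?thesis .
qed

section \<open>The condition of part (b)\<close>

definition top_condition :: "nat \<Rightarrow> nat \<Rightarrow> nat \<Rightarrow> bool" where
  "top_condition s s2 d \<longleftrightarrow> 4 * (s*s + s) \<le> 2*(d+1)*s2 + (d+1)*(d+2)"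

lemma top_condition_iff_real:
  "top_condition s s2 d \<longleftrightarrow> real s2 \<ge> 2 / (real d + 1) * (real s ^ 2 + real s) - (real d + 2) / 2"
proof -
  have "2 / (real d + 1) * (real s ^ 2 + real s) - (real d + 2) / 2
     = (4*(real s*real s + real s) - (real d+1)*(real d+2)) / (2*(real d+1))"
    by (simp add: field_simps power2_eq_square)
  then have "real s2 \<ge> 2 / (real d + 1) * (real s ^ 2 + real s) - (real d + 2) / 2
     \<longleftrightarrow> 4*(real s*real s + real s) - (real d+1)*(real d+2) \<le> real s2 * (2*(real d+1))"
    by (simp add: pos_divide_le_eq)
  moreover have "real (4 * (s*s + s)) = 4*(real s*real s + real s)"
    and "real (2*(d+1)*s2 + (d+1)*(d+2)) = real s2 * (2*(real d+1)) + (real d+1)*(real d+2)"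
    by (simp_all add: algebra_simps)
  ultimately show ?thesis
    unfolding top_condition_def of_nat_le_iff[symmetric, where 'a=real] by linarith
qed

lemma top_condition_slack:
  "real (2*(d+1)*s2 + (d+1)*(d+2)) - real (4 * (s*s + s))
    = 2*(real d + 1) * (real s2 + 1 - (2*real s - d)) - ((2*real s - d)^2 + d)"
  by (simp add: algebra_simps power2_eq_square)

lemma top_condition_iff_step_bound:
  "top_condition s s2 d \<longleftrightarrow> (2*real s - d)^2 + d \<le> 2*(real d + 1) * (real s2 + 1 - (2*real s - d))"
proof -
  have "top_condition s s2 d \<longleftrightarrow> 0 \<le> real (2*(d+1)*s2 + (d+1)*(d+2)) - real (4 * (s*s + s))"
    unfolding top_condition_def diff_ge_0_iff_ge of_nat_le_iff ..
  then show ?thesis unfolding top_condition_slack by simp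
qed

lemma top_condition_mono:
  assumes "d' \<le> d" "top_condition s s2 d'"
  shows "top_condition s s2 d"
proof -
  have "2*(d'+1)*s2 + (d'+1)*(d'+2) \<le> 2*(d+1)*s2 + (d+1)*(d+2)"
    using assms(1) by (intro add_mono mult_le_mono) simp_all
  then show ?thesis using assms(2) unfolding top_condition_def by linarith
qed

lemma mult_self_add_mod_5: "(s * s + s) mod 5 \<in> {0, 1, 2::nat}"
proof -
  have "(s * s + s) mod 5 = ((s mod 5) * (s mod 5) mod 5 + s mod 5) mod 5"
    by (simp only: mod_mult_eq mod_add_eq)
  moreover have "s mod 5 \<in> {0, 1, 2, 3, 4}" by auto
  ultimately show ?thesis by auto
qed

lemma four_mult_gap_of_mod_5:
  fixes q y :: nat
  assumes "even q" "q mod 5 \<in> {0, 1, 2}" "10*y + 30 < 4*q"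
  shows "10*y + 34 \<le> 4*q"
  using assms by auto presburger+

text \<open>For \<open>d \<le> 4\<close>, \<open>top_gap d\<close> is the least possible positive difference between the two
  sides of \<open>top_condition\<close>.\<close>
definition top_gap :: "nat \<Rightarrow> nat" where
  "top_gap d = (if d \<le> 1 then 1 else if d = 2 then 2 else 4)"

lemma top_condition_gap:
  assumes "d \<le> 4" "\<not> top_condition s s2 d"
  shows "2*(d+1)*s2 + (d+1)*(d+2) + top_gap d \<le> 4 * (s*s + s)"
proof -
  define q where "q = s*s + s"
  have "even q" unfolding q_def by simp
  have "q mod 5 \<in> {0, 1, 2}" unfolding q_def by (rule mult_self_add_mod_5)
  have less: "2*(d+1)*s2 + (d+1)*(d+2) < 4 * q"
    using assms(2) unfolding top_condition_def q_def by simp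
  consider "d \<le> 1" | "d = 2" | "d = 3" | "d = 4" using assms(1) by linarith
  then have "2*(d+1)*s2 + (d+1)*(d+2) + top_gap d \<le> 4 * q"
  proof cases
    case 1
    then show ?thesis using less by (simp add: top_gap_def)
  next
    case 2
    then have "6*s2 + 12 < 4 * q" using less by simp
    then have "6*s2 + 14 \<le> 4 * q" by presburger
    then show ?thesis using \<open>d = 2\<close> by (simp add: top_gap_def)
  next
    case 3
    then have "8*s2 + 20 < 4 * q" using less by simp
    then have "8*s2 + 24 \<le> 4 * q" using \<open>even q\<close> by presburger
    then show ?thesis using \<open>d = 3\<close> by (simp add: top_gap_def)
  next
    case 4
    then have "10*s2 + 30 < 4 * q" using less by simp
    then have "10*s2 + 34 \<le> 4 * q"
      using \<open>even q\<close> \<open>q mod 5 \<in> {0, 1, 2}\<close> by (intro four_mult_gap_of_mod_5)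
    then show ?thesis using \<open>d = 4\<close> by (simp add: top_gap_def)
  qed
  then show ?thesis unfolding q_def .
qed

section \<open>The step at the top degree\<close>

lemma top_poly_values:
  "top_poly 0 s = 1"
  "top_poly 1 s = 2*s^2"
  "top_poly 2 s = 2*s^2 - 4*s^3 + 4*s^4"
  "top_poly 3 s = 8*s^2 - 24*s^3 + 32*s^4 - 24*s^5 + 8*s^6"
  "top_poly 4 s = 72*s^2 - 264*s^3 + 424*s^4 - 408*s^5 + 256*s^6 - 96*s^7 + 16*s^8"
  "top_poly 5 s = 1152*s^2 - 4800*s^3 + 8800*s^4 - 9680*s^5 + 7296*s^6 - 3920*s^7 + 1440*s^8 - 320*s^9 + 32*s^10"
  unfolding top_poly_def
  by (simp_all add: eval_nat_numeral sum.atMost_Suc prod.lessThan_Suc algebra_simps power2_eq_square)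

lemma top_poly_ratio_upper:
  assumes "d \<le> 4" "real d + 1 \<le> s"
  shows "2 * top_poly (d+1) s \<le> ((2*s - d)^2 + d) * top_poly d s"
proof -
  define t where "t = s - d - 1"
  have "t \<ge> 0" using assms(2) by (simp add: t_def)
  consider "d = 0" | "d = 1" | "d = 2" | "d = 3" | "d = 4" using assms(1) by linarith
  then show ?thesis
  proof cases
    case 1
    have "((2*s - 0)^2 + 0) * top_poly 0 s - 2 * top_poly 1 s = 0"
      unfolding top_poly_values by (simp add: power2_eq_square)
    then show ?thesis using \<open>d = 0\<close> by simp
  next
    case 2
    have "((2*s - 1)^2 + 1) * top_poly 1 s - 2 * top_poly 2 s = 0"
      unfolding top_poly_values by (simp add: algebra_simps power2_eq_square eval_nat_numeral)
    then show ?thesis unfolding \<open>d = 1\<close> one_add_one by simp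
  next
    case 3
    have "((2*s - 2)^2 + 2) * top_poly 2 s - 2 * top_poly 3 s = 180 + 192*t + 68*t^2 + 8*t^3"
      unfolding top_poly_values t_def \<open>d = 2\<close> by (simp add: algebra_simps power2_eq_square eval_nat_numeral)
    moreover have "0 \<le> 180 + 192*t + 68*t^2 + 8*t^3"
      using \<open>t \<ge> 0\<close> by (intro add_nonneg_nonneg mult_nonneg_nonneg zero_le_power) simp_all
    ultimately show ?thesis unfolding \<open>d = 2\<close> by simp
  next
    case 4
    have "((2*s - 3)^2 + 3) * top_poly 3 s - 2 * top_poly 4 s
        = 20736 + 31104*t + 18576*t^2 + 5520*t^3 + 816*t^4 + 48*t^5"
      unfolding top_poly_values t_def \<open>d = 3\<close> by (simp add: algebra_simps power2_eq_square eval_nat_numeral)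
    moreover have "0 \<le> 20736 + 31104*t + 18576*t^2 + 5520*t^3 + 816*t^4 + 48*t^5"
      using \<open>t \<ge> 0\<close> by (intro add_nonneg_nonneg mult_nonneg_nonneg zero_le_power) simp_all
    ultimately show ?thesis unfolding \<open>d = 3\<close> by simp
  next
    case 5
    have "((2*s - 4)^2 + 4) * top_poly 4 s - 2 * top_poly 5 s
        = 3494400 + 6024960*t + 4455456*t^2 + 1831008*t^3 + 451392*t^4 + 66720*t^5 + 5472*t^6 + 192*t^7"
      unfolding top_poly_values t_def \<open>d = 4\<close> by (simp add: algebra_simps power2_eq_square eval_nat_numeral)
    moreover have "0 \<le> 3494400 + 6024960*t + 4455456*t^2 + 1831008*t^3 + 451392*t^4 + 66720*t^5 + 5472*t^6 + 192*t^7"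
      using \<open>t \<ge> 0\<close> by (intro add_nonneg_nonneg mult_nonneg_nonneg zero_le_power) simp_all
    ultimately show ?thesis unfolding \<open>d = 4\<close> by simp
  qed
qed

lemma top_poly_ratio_lower:
  assumes "d \<le> 4" "real d + 1 \<le> s"
  shows "((2*s - d)^2 + d - top_gap d) * top_poly d s < 2 * top_poly (d+1) s"
proof -
  define t where "t = s - d - 1"
  have "t \<ge> 0" using assms(2) by (simp add: t_def)
  consider "d = 0" | "d = 1" | "d = 2" | "d = 3" | "d = 4" using assms(1) by linarith
  then show ?thesis
  proof cases
    case 1
    have "2 * top_poly 1 s - ((2*s - 0)^2 + 0 - 1) * top_poly 0 s = 1"
      unfolding top_poly_values by (simp add: power2_eq_square)
    then show ?thesis using \<open>d = 0\<close> by (simp add: top_gap_def)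
  next
    case 2
    have "2 * top_poly 2 s - ((2*s - 1)^2 + 1 - 1) * top_poly 1 s = 2 * s^2"
      unfolding top_poly_values by (simp add: algebra_simps power2_eq_square eval_nat_numeral)
    moreover have "0 < 2 * s^2" using assms(2) by simp
    ultimately have "((2*s - 1)^2 + 1 - 1) * top_poly 1 s < 2 * top_poly 2 s" by linarith
    then show ?thesis unfolding \<open>d = 1\<close> one_add_one by (simp add: top_gap_def)
  next
    case 3
    have "2 * top_poly 3 s - ((2*s - 2)^2 + 2 - 2) * top_poly 2 s
        = 288 + 480*t + 296*t^2 + 80*t^3 + 8*t^4"
      unfolding top_poly_values t_def \<open>d = 2\<close> by (simp add: algebra_simps power2_eq_square eval_nat_numeral)
    moreover have "0 < 288 + 480*t + 296*t^2 + 80*t^3 + 8*t^4"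
      using \<open>t \<ge> 0\<close> by (intro add_pos_nonneg mult_nonneg_nonneg zero_le_power) simp_all
    ultimately show ?thesis unfolding \<open>d = 2\<close> by (simp add: top_gap_def)
  next
    case 4
    have "2 * top_poly 4 s - ((2*s - 3)^2 + 3 - 4) * top_poly 3 s
        = 39168 + 71040*t + 54032*t^2 + 22032*t^3 + 5072*t^4 + 624*t^5 + 32*t^6"
      unfolding top_poly_values t_def \<open>d = 3\<close> by (simp add: algebra_simps power2_eq_square eval_nat_numeral)
    moreover have "0 < 39168 + 71040*t + 54032*t^2 + 22032*t^3 + 5072*t^4 + 624*t^5 + 32*t^6"
      using \<open>t \<ge> 0\<close> by (intro add_pos_nonneg mult_nonneg_nonneg zero_le_power) simp_all
    ultimately show ?thesis unfolding \<open>d = 3\<close> by (simp add: top_gap_def)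
  next
    case 5
    have "2 * top_poly 5 s - ((2*s - 4)^2 + 4 - 4) * top_poly 4 s
        = 3340800 + 6846720*t + 6143392*t^2 + 3153856*t^3 + 1013504*t^4 + 208768*t^5 + 26912*t^6
          + 1984*t^7 + 64*t^8"
      unfolding top_poly_values t_def \<open>d = 4\<close> by (simp add: algebra_simps power2_eq_square eval_nat_numeral)
    moreover have "0 < 3340800 + 6846720*t + 6143392*t^2 + 3153856*t^3 + 1013504*t^4 + 208768*t^5 + 26912*t^6 + 1984*t^7 + 64*t^8"
      using \<open>t \<ge> 0\<close> by (intro add_pos_nonneg mult_nonneg_nonneg zero_le_power) simp_all
    ultimately show ?thesis unfolding \<open>d = 4\<close> by (simp add: top_gap_def)
  qed
qed

lemma top_poly_step_iff:
  assumes "d \<le> 4" "d + 1 \<le> s"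
  shows "top_poly (d+1) (real s) \<le> (real d + 1) * (real s2 + 1 - (2*real s - d)) * top_poly d (real s)
    \<longleftrightarrow> top_condition s s2 d"
proof -
  let ?y = "(real d + 1) * (real s2 + 1 - (2*real s - d))" and ?c = "(2*real s - d)^2 + d"
  have upper: "2 * top_poly (d+1) (real s) \<le> ?c * top_poly d (real s)"
    and lower: "(?c - top_gap d) * top_poly d (real s) < 2 * top_poly (d+1) (real s)"
    using top_poly_ratio_upper[OF assms(1)] top_poly_ratio_lower[OF assms(1)] assms(2) by simp_all
  have nonneg: "top_poly d (real s) \<ge> 0" by (rule top_poly_nonneg)
  show ?thesis
  proof
    assume le: "top_poly (d+1) (real s) \<le> ?y * top_poly d (real s)"
    show "top_condition s s2 d"
    proof (rule ccontr)
      assume "\<not> top_condition s s2 d"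
      then have "real (2*(d+1)*s2 + (d+1)*(d+2)) + top_gap d \<le> real (4 * (s*s + s))"
        using top_condition_gap[OF assms(1)] by (simp only: of_nat_add[symmetric] of_nat_le_iff)
      then have "2 * ?y \<le> ?c - top_gap d"
        using top_condition_slack[of d s2 s] by linarith
      then have "2 * ?y * top_poly d (real s) \<le> (?c - top_gap d) * top_poly d (real s)"
        using nonneg by (rule mult_right_mono)
      then show False using le lower by (simp only: mult.assoc; linarith)
    qed
  next
    assume "top_condition s s2 d"
    then have "?c \<le> 2 * ?y"
      unfolding top_condition_iff_step_bound mult.assoc .
    then have "?c * top_poly d (real s) \<le> 2 * ?y * top_poly d (real s)"
      using nonneg by (rule mult_right_mono)
    then show "top_poly (d+1) (real s) \<le> ?y * top_poly d (real s)"
      using upper by (simp only: mult.assoc; linarith)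
  qed
qed

lemma triple_sum_small_values:
  "triple_sum 1 0 = 1" "triple_sum 1 1 = 2"
  "triple_sum 2 0 = 1" "triple_sum 2 1 = 4" "triple_sum 2 2 = 10"
  "triple_sum 3 1 = 6" "triple_sum 3 2 = 24" "triple_sum 3 3 = 56"
  "triple_sum 4 3 = 152" "triple_sum 4 4 = 346"
  by (simp_all add: triple_sum_def eval_nat_numeral)

lemma real_step_ineq_iff_nat:
  "real K * real a' \<le> (real s2 + 1 - real K) * real a \<longleftrightarrow> K * a' + K * a \<le> (s2 + 1) * a"
proof -
  have "real K * real a' \<le> (real s2 + 1 - real K) * real a \<longleftrightarrow> real (K * a' + K * a) \<le> real ((s2 + 1) * a)"
    by (simp add: algebra_simps)
  then show ?thesis by (simp only: of_nat_le_iff)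
qed

lemma top_step_iff:
  assumes "d \<le> 4" "d < 2*s"
  shows "real (2*s-d) * triple_sum s (2*s-d-1) \<le> (real s2 + 1 - real (2*s-d)) * triple_sum s (2*s-d)
    \<longleftrightarrow> top_condition s s2 d"
proof (cases "d + 1 \<le> s")
  case True
  have "real (2*s-d) = 2*real s - d" using assms(2) by simp
  then show ?thesis
    using top_step_nonneg_iff[OF True, of "real s2 + 1 - real (2*s-d)"] top_poly_step_iff[OF assms(1) True, of s2]
    by (simp add: algebra_simps)
next
  case False
  txt \<open>The closed form needs \<open>d + 1 \<le> s\<close>; the six remaining pairs are checked directly.\<close>
  then have "(s = 1 \<and> d = 1) \<or> (s = 2 \<and> d = 2) \<or> (s = 2 \<and> d = 3) \<or> (s = 3 \<and> d = 3)
      \<or> (s = 3 \<and> d = 4) \<or> (s = 4 \<and> d = 4)"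
    using assms by auto
  then show ?thesis
    unfolding real_step_ineq_iff_nat
    by (elim disjE; simp add: top_condition_def triple_sum_small_values[unfolded One_nat_def]; presburger)
qed

section \<open>Monotonicity steps of f\<close>

lemma triple_sum_step_bound:
  assumes "1 \<le> k" "k \<le> 2*s"
    and quad: "real k * (real k + 1) \<le> (real s2 + 1 - real k) * (2 * (2 * real s + 1 - real k))"
  shows "real k * triple_sum s (k-1) \<le> (real s2 + 1 - real k) * triple_sum s k"
proof -
  have "real_of_int (2 * (2*int s + 1 - int k) * triple_sum s (k-1)) \<le> real_of_int ((int k + 1) * triple_sum s k)"
    using triple_sum_growth[OF assms(1), of s] by linarith
  then have growth: "2 * (2 * real s + 1 - real k) * triple_sum s (k-1) \<le> (real k + 1) * triple_sum s k"
    by simp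
  have "0 < real k * (real k + 1)" using assms(1) by simp
  then have "0 < (real s2 + 1 - real k) * (2 * (2 * real s + 1 - real k))" using quad by linarith
  moreover have "2 * (2 * real s + 1 - real k) > 0" using assms(2) by simp
  ultimately have y: "0 \<le> real s2 + 1 - real k" by (simp add: zero_less_mult_iff)
  have "(real k + 1) * (real k * triple_sum s (k-1)) = (real k * (real k + 1)) * triple_sum s (k-1)"
    by (simp add: algebra_simps)
  also have "\<dots> \<le> ((real s2 + 1 - real k) * (2 * (2 * real s + 1 - real k))) * triple_sum s (k-1)"
    using quad by (rule mult_right_mono) simp
  also have "\<dots> = (real s2 + 1 - real k) * (2 * (2 * real s + 1 - real k) * triple_sum s (k-1))"
    by (simp add: mult_ac)
  also have "\<dots> \<le> (real s2 + 1 - real k) * ((real k + 1) * triple_sum s k)"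
    using growth y by (rule mult_left_mono)
  also have "\<dots> = (real k + 1) * ((real s2 + 1 - real k) * triple_sum s k)"
    by (simp add: mult_ac)
  finally show ?thesis by (simp add: mult_le_cancel_left_pos add_pos_nonneg)
qed

lemma interior_step_condition:
  fixes d k s s2 :: nat
  assumes "1 \<le> k" "k + d + 1 \<le> 2*s"
    and "top_condition s s2 d"
  shows "real k * (real k + 1) \<le> (real s2 + 1 - real k) * (2 * (2 * real s + 1 - real k))"
proof -
  have "real (4 * (s*s + s)) \<le> real (2*(d+1)*s2 + (d+1)*(d+2))"
    using assms(3) unfolding top_condition_def of_nat_le_iff .
  then have cond: "4 * (real s * real s + real s) \<le> 2*(real d + 1) * real s2 + (real d + 1) * (real d + 2)"
    by (simp add: algebra_simps)
  define u where "u = 2 * real s - real d"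
  define y where "y = real s2 + 1 - real k"
  have ku: "real k + 1 \<le> u" using assms(2) unfolding u_def by simp
  then have "real d + 2 \<le> 2 * real s - real k + 1" unfolding u_def by simp
  have "(real d + 1) * real k \<le> (real d + 1) * (u - 1)"
    using ku by (intro mult_left_mono) simp_all
  then have y_bound: "u^2 + 3 * real d + 2 \<le> 2 * (real d + 1) * y"
    using cond unfolding u_def y_def by (simp add: algebra_simps power2_eq_square)
  then have "y \<ge> 0"
    by (smt (verit) zero_le_power2 of_nat_0_le_iff zero_le_mult_iff)
  have "(real d + 1) * (real k * (real k + 1)) \<le> (real d + 1) * ((u - 1) * u)"
    using ku assms(1) by (intro mult_left_mono mult_mono) simp_all
  also have "\<dots> \<le> (real d + 2) * (u^2 + 3 * real d + 2)"
  proof -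
    have "0 \<le> u^2 + (real d + 1) * u + (real d + 2) * (3 * real d + 2)"
      using ku assms(1) by (intro add_nonneg_nonneg mult_nonneg_nonneg) simp_all
    then show ?thesis by (simp add: algebra_simps power2_eq_square)
  qed
  also have "\<dots> \<le> (real d + 2) * (2 * (real d + 1) * y)"
    using y_bound by (intro mult_left_mono) simp_all
  also have "\<dots> \<le> (real d + 1) * (2 * (2 * real s - real k + 1) * y)"
  proof -
    have swap: "(real d + 2) * (2 * (real d + 1) * y) = (real d + 1) * (2 * (real d + 2) * y)"
      by (simp add: algebra_simps)
    have "2 * (real d + 2) * y \<le> 2 * (2 * real s - real k + 1) * y"
      using \<open>real d + 2 \<le> 2 * real s - real k + 1\<close> \<open>y \<ge> 0\<close> by (intro mult_right_mono) simp_all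
    then show ?thesis unfolding swap by (rule mult_left_mono) simp
  qed
  finally have "real k * (real k + 1) \<le> 2 * (2 * real s - real k + 1) * y"
    by (simp add: mult_le_cancel_left_pos)
  then show ?thesis unfolding u_def y_def by (simp add: algebra_simps)
qed

definition fss_nat :: "nat \<Rightarrow> nat \<Rightarrow> nat \<Rightarrow> nat" where
  "fss_nat s s2 k = (s2 choose k) * triple_sum s k"

lemma fss_eq_fss_nat: "fss s s2 N = (if N < 0 then 0 else fss_nat s s2 (nat N))"
  unfolding fss_def fss_nat_def triple_sum_def by simp

lemma fss_of_nat [simp]: "fss s s2 (int k) = fss_nat s s2 k"
  by (simp add: fss_eq_fss_nat)

lemma triple_sum_eq_0:
  assumes "2*s < k"
  shows "triple_sum s k = 0"
  unfolding triple_sum_def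
proof (intro sum.neutral ballI)
  fix i assume "i \<in> {..k}"
  then have "s < i \<or> s < k - i" using assms by auto
  then show "(s choose i) * (s choose (k - i)) * (k choose i) = 0" by auto
qed

lemma triple_sum_pos:
  assumes "k \<le> 2*s"
  shows "triple_sum s k > 0"
proof -
  define i where "i = k - min k s"
  have i: "i \<le> s" "i \<le> k" "k - i \<le> s" unfolding i_def using assms by auto
  then have "0 < (s choose i) * (s choose (k - i)) * (k choose i)" by simp
  also have "\<dots> \<le> triple_sum s k"
    unfolding triple_sum_def by (rule member_le_sum) (use i in auto)
  finally show ?thesis .
qed

lemma fss_nat_0 [simp]: "fss_nat s s2 0 = 1"
  by (simp add: fss_nat_def triple_sum_def)

lemma fss_0 [simp]: "fss s s2 0 = 1"
  by (simp add: fss_eq_fss_nat)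

lemma fss_eq_0_outside:
  assumes "N < 0 \<or> 2*int s < N"
  shows "fss s s2 N = 0"
proof (cases "N < 0")
  case False
  then have "2*s < nat N" using assms by linarith
  then show ?thesis using False by (simp add: fss_eq_fss_nat fss_nat_def triple_sum_eq_0)
qed (simp add: fss_eq_fss_nat)

lemma fss_nat_step_ratio:
  assumes "k = Suc j"
  shows "real k * fss_nat s s2 k = real (s2 choose j) * (real (s2 - j) * triple_sum s k)"
    and "real k * fss_nat s s2 (k-1) = real (s2 choose j) * (real k * triple_sum s (k-1))"
proof -
  have "real k * fss_nat s s2 k = real (Suc j * (s2 choose Suc j)) * triple_sum s k"
    unfolding fss_nat_def assms by (simp only: of_nat_mult mult.assoc)
  also have "\<dots> = real (s2 choose j) * (real (s2 - j) * triple_sum s k)"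
    unfolding Suc_times_binomial_eq_diff_times_binomial by simp
  finally show "real k * fss_nat s s2 k = real (s2 choose j) * (real (s2 - j) * triple_sum s k)" .
  show "real k * fss_nat s s2 (k-1) = real (s2 choose j) * (real k * triple_sum s (k-1))"
    unfolding fss_nat_def assms by simp
qed

lemma fss_nat_step_mono:
  assumes "1 \<le> k" "k \<le> 2*s"
    and step: "real k * triple_sum s (k-1) \<le> (real s2 + 1 - real k) * triple_sum s k"
  shows "fss_nat s s2 (k-1) \<le> fss_nat s s2 k"
proof -
  obtain j where k: "k = Suc j" using assms(1) by (cases k) auto
  have "0 < real k * triple_sum s (k-1)" using assms(1,2) triple_sum_pos[of "k-1" s] by simp
  then have "0 < (real s2 + 1 - real k) * triple_sum s k" using step by linarith
  then have "j \<le> s2" using k by (simp add: zero_less_mult_iff)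
  then have "real (s2 - j) = real s2 + 1 - real k" using k by (simp add: of_nat_diff)
  then have "real k * fss_nat s s2 (k-1) \<le> real k * fss_nat s s2 k"
    unfolding fss_nat_step_ratio[OF k] using step by (intro mult_left_mono) simp_all
  then show ?thesis using assms(1) by (simp add: mult_le_cancel_left_pos)
qed

lemma fss_nat_step_strict_anti:
  assumes "1 \<le> k" "fss_nat s s2 k > 0"
    and step: "(real s2 + 1 - real k) * triple_sum s k < real k * triple_sum s (k-1)"
  shows "fss_nat s s2 k < fss_nat s s2 (k-1)"
proof -
  obtain j where k: "k = Suc j" using assms(1) by (cases k) auto
  have "k \<le> s2" using assms(2) unfolding fss_nat_def by (metis binomial_eq_0 mult_is_0 not_le less_irrefl)
  then have diff: "real (s2 - j) = real s2 + 1 - real k" using k by (simp add: of_nat_diff)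
  have "real (s2 choose j) > 0" using \<open>k \<le> s2\<close> k by simp
  then have "real k * fss_nat s s2 k < real k * fss_nat s s2 (k-1)"
    unfolding fss_nat_step_ratio[OF k] diff using step by (rule mult_strict_left_mono[rotated])
  then show ?thesis using assms(1) by (simp add: mult_less_cancel_left_pos)
qed

section \<open>The maximiser of f\<close>

lemma gss_greatest_maximizer:
  shows "fss s s2 M \<le> fss s s2 (gss s s2)"
    and "(\<And>M. fss s s2 M \<le> fss s s2 N) \<Longrightarrow> N \<le> gss s s2"
proof -
  let ?F = "fss s s2"
  let ?Max = "{N. \<forall>M. ?F M \<le> ?F N}"
  have bounded: "?Max \<subseteq> {0..2*int s}"
  proof
    fix N assume "N \<in> ?Max"
    then have "?F 0 \<le> ?F N" by blast
    then have "?F N \<noteq> 0" by auto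
    then show "N \<in> {0..2*int s}" using fss_eq_0_outside[of N s s2] by (cases "N < 0 \<or> 2*int s < N") auto
  qed
  have "finite (?F ` {0..2*int s})" "?F ` {0..2*int s} \<noteq> {}" by auto
  then obtain x where x: "?F x = Max (?F ` {0..2*int s})" "x \<in> {0..2*int s}"
    by (metis Max_in imageE)
  have "x \<in> ?Max"
  proof (intro CollectI allI)
    fix M
    show "?F M \<le> ?F x"
      using x(1) fss_eq_0_outside[of M s s2] by (cases "M \<in> {0..2*int s}") auto
  qed
  then have "?Max \<noteq> {}" by blast
  moreover have "finite ?Max" using bounded finite_subset by blast
  ultimately have "gss s s2 = Max ?Max"
    unfolding gss_def by (intro Greatest_equality) (use Max_in in auto)
  moreover have "Max ?Max \<in> ?Max" using Max_in \<open>finite ?Max\<close> \<open>?Max \<noteq> {}\<close> by blast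
  ultimately show "?F M \<le> ?F (gss s s2)" by simp
  show "N \<le> gss s s2" if "\<And>M. ?F M \<le> ?F N"
    using that \<open>gss s s2 = Max ?Max\<close> \<open>finite ?Max\<close> by simp
qed

lemma gss_bounds: "0 \<le> gss s s2" "gss s s2 \<le> 2 * int s"
proof -
  have "fss s s2 0 \<le> fss s s2 (gss s s2)" by (rule gss_greatest_maximizer)
  then have "fss s s2 (gss s s2) \<noteq> 0" by auto
  then have "\<not> (gss s s2 < 0 \<or> 2 * int s < gss s s2)" using fss_eq_0_outside by metis
  then show "0 \<le> gss s s2" "gss s s2 \<le> 2 * int s" by auto
qed

lemma gss_ge_of_mono:
  assumes mono: "\<And>k. 1 \<le> k \<Longrightarrow> k \<le> K \<Longrightarrow> fss_nat s s2 (k-1) \<le> fss_nat s s2 k"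
  shows "int K \<le> gss s s2"
proof (rule ccontr)
  assume less: "\<not> int K \<le> gss s s2"
  obtain g where g: "gss s s2 = int g" using gss_bounds(1) nonneg_eq_int by blast
  have "fss_nat s s2 n \<le> fss_nat s s2 (Suc n)" if "n \<in> {..<K}" for n
    using mono[of "Suc n"] that by simp
  moreover have "g \<le> K" using less g by simp
  ultimately have "fss_nat s s2 g \<le> fss_nat s s2 K"
    by (rule lift_Suc_mono_le_ivl[where N = "{..<K}"]) auto
  then have "fss s s2 M \<le> fss s s2 (int K)" for M
    using gss_greatest_maximizer(1)[of s s2 M] g by simp
  then have "int K \<le> gss s s2" by (rule gss_greatest_maximizer(2))
  then show False using less by simp
qed

lemma gss_less_of_strict_anti:
  assumes "1 \<le> K"
    and anti: "\<And>k. K \<le> k \<Longrightarrow> fss_nat s s2 k > 0 \<Longrightarrow> fss_nat s s2 k < fss_nat s s2 (k-1)"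
  shows "gss s s2 < int K"
proof (rule ccontr)
  assume "\<not> gss s s2 < int K"
  moreover obtain j where "gss s s2 = int j" using gss_bounds(1) nonneg_eq_int by blast
  ultimately have j: "gss s s2 = int j" "K \<le> j" by auto
  have "fss s s2 0 \<le> fss s s2 (gss s s2)" by (rule gss_greatest_maximizer)
  then have "fss_nat s s2 j > 0" using j(1) by simp
  then have "fss_nat s s2 j < fss_nat s s2 (j-1)" using anti j(2) by blast
  moreover have "fss s s2 (int (j-1)) \<le> fss s s2 (gss s s2)" by (rule gss_greatest_maximizer)
  ultimately show False using j(1) by simp
qed

lemma gss_less_if_not_top_condition:
  assumes "d \<le> 4" "d < 2*s" "\<not> top_condition s s2 d"
  shows "gss s s2 < 2 * int s - int d"
proof -
  have "gss s s2 < int (2*s - d)"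
  proof (rule gss_less_of_strict_anti)
    show "1 \<le> 2*s - d" using assms(2) by simp
    fix k assume k: "2*s - d \<le> k" "fss_nat s s2 k > 0"
    then have "k \<le> 2*s" using triple_sum_eq_0[of s k] unfolding fss_nat_def by fastforce
    define d' where "d' = 2*s - k"
    have d': "d' \<le> 4" "d' < 2*s" "k = 2*s - d'" "\<not> top_condition s s2 d'"
      using k(1) \<open>k \<le> 2*s\<close> assms top_condition_mono[of d' d] unfolding d'_def by auto
    have "\<not> real k * triple_sum s (k-1) \<le> (real s2 + 1 - real k) * triple_sum s k"
      using top_step_iff[OF d'(1,2), of s2] d'(3,4) by simp
    then show "fss_nat s s2 k < fss_nat s s2 (k-1)"
      using assms(2) k by (intro fss_nat_step_strict_anti) auto
  qed
  then show ?thesis using assms(2) by simp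
qed

lemma gss_ge_if_top_condition:
  assumes "d \<le> 4" "d < 2*s" "top_condition s s2 d"
  shows "2 * int s - int d \<le> gss s s2"
proof -
  have "int (2*s - d) \<le> gss s s2"
  proof (rule gss_ge_of_mono)
    fix k assume k: "1 \<le> k" "k \<le> 2*s - d"
    have "real k * triple_sum s (k-1) \<le> (real s2 + 1 - real k) * triple_sum s k"
    proof (cases "k = 2*s - d")
      case True
      then show ?thesis using top_step_iff[OF assms(1,2)] assms(3) by simp
    next
      case False
      then have "k + d + 1 \<le> 2*s" using k by auto
      then show ?thesis
        using k assms(3) by (intro triple_sum_step_bound interior_step_condition) auto
    qed
    then show "fss_nat s s2 (k-1) \<le> fss_nat s s2 k"
      using k by (intro fss_nat_step_mono) auto
  qed
  then show ?thesis using assms(2) by simp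
qed

lemma gss_ge_iff_top_condition:
  assumes "d \<le> 4"
  shows "2 * int s - int d \<le> gss s s2 \<longleftrightarrow> top_condition s s2 d"
proof (cases "d < 2*s")
  case True
  show ?thesis
  proof
    show "top_condition s s2 d" if "2 * int s - int d \<le> gss s s2"
      using gss_less_if_not_top_condition[OF assms True] that by fastforce
  qed (rule gss_ge_if_top_condition[OF assms True])
next
  case False
  have "4 * (s*s + s) = 2*s * (2*s + 2)" by (simp add: algebra_simps)
  also have "\<dots> \<le> (d+1)*(d+2)" using False by (intro mult_le_mono) simp_all
  finally have "top_condition s s2 d" unfolding top_condition_def by linarith
  then show ?thesis using False gss_bounds(1)[of s s2] by simp
qed

lemma gss_eq_s2_if_mult_Suc_le:
  assumes "1 \<le> s" "s2 * (s2 + 1) \<le> 2*s + 2"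
  shows "gss s s2 = int s2"
proof (rule antisym)
  have "fss s s2 0 \<le> fss s s2 (gss s s2)" by (rule gss_greatest_maximizer)
  moreover obtain g where g: "gss s s2 = int g" using gss_bounds(1) nonneg_eq_int by blast
  ultimately have "fss_nat s s2 g \<noteq> 0" by simp
  then have "g \<le> s2" unfolding fss_nat_def using binomial_eq_0[of s2 g] by fastforce
  then show "gss s s2 \<le> int s2" using g by simp
next
  have "s2 \<le> s"
  proof (rule ccontr)
    assume "\<not> s2 \<le> s"
    then have "(s+1)*(s+2) \<le> s2 * (s2 + 1)" by (intro mult_le_mono) auto
    then show False using assms by (simp add: algebra_simps)
  qed
  show "int s2 \<le> gss s s2"
  proof (rule gss_ge_of_mono)
    fix k assume k: "1 \<le> k" "k \<le> s2"
    have "real k * (real k + 1) \<le> real s2 * (real s2 + 1)"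
      using k by (intro mult_mono) simp_all
    also have "\<dots> \<le> 2 * real s + 2"
    proof -
      have "real (s2 * (s2 + 1)) \<le> real (2*s + 2)" using assms(2) by (simp only: of_nat_le_iff)
      then show ?thesis by (simp add: algebra_simps)
    qed
    also have "\<dots> \<le> 1 * (2 * (2 * real s + 1 - real k))"
      using k \<open>s2 \<le> s\<close> by simp
    also have "\<dots> \<le> (real s2 + 1 - real k) * (2 * (2 * real s + 1 - real k))"
      using k \<open>s2 \<le> s\<close> by (intro mult_right_mono) simp_all
    finally have "real k * triple_sum s (k-1) \<le> (real s2 + 1 - real k) * triple_sum s k"
      using k \<open>s2 \<le> s\<close> by (intro triple_sum_step_bound) simp_all
    then show "fss_nat s s2 (k-1) \<le> fss_nat s s2 k"
      using k \<open>s2 \<le> s\<close> by (intro fss_nat_step_mono) simp_all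
  qed
qed

lemma sqrt_bound_imp_mult_Suc_le:
  assumes "real s2 \<le> (sqrt (8 * real s + 9) - 1) / 2"
  shows "s2 * (s2 + 1) \<le> 2*s + 2"
proof -
  have "2 * real s2 + 1 \<le> sqrt (8 * real s + 9)" using assms by simp
  then have "(2 * real s2 + 1)^2 \<le> (sqrt (8 * real s + 9))^2"
    by (rule power_mono) simp
  then have "(2 * real s2 + 1)^2 \<le> 8 * real s + 9"
    by simp
  then have "real (s2 * (s2 + 1)) \<le> real (2*s + 2)"
    by (simp add: power2_eq_square algebra_simps)
  then show ?thesis by (simp only: of_nat_le_iff)
qed

theorem proposition1p3:
  fixes s1 s2 :: nat
  assumes "s1 \<ge> 1"
  shows "(real s2 \<le> (sqrt (8 * real s1 + 9) - 1) / 2 \<longrightarrow> gss s1 s2 = int s2)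
    \<and> gss s1 s2 \<le> 2 * int s1
    \<and> (\<forall>d::nat. d \<le> 4 \<longrightarrow>
         (gss s1 s2 \<ge> 2 * int s1 - int d \<longleftrightarrow>
          real s2 \<ge> 2 / (real d + 1) * (real s1 ^ 2 + real s1) - (real d + 2) / 2))"
  using gss_eq_s2_if_mult_Suc_le[OF assms sqrt_bound_imp_mult_Suc_le] gss_bounds(2)
    gss_ge_iff_top_condition top_condition_iff_real
  by blast

end
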